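(* Let $F$ be a signature on a finite set $V$ that is non-degenerate, but such that every pinning $F_p$ with $\mathrm{dom}(p)\ne\emptyset$ is degenerate. Then either $|V|=2$, or $\mathrm{supp}(F)=\{x,\overline x\}$ for some configuration $x$.
   Context: A signature on $V$ is a function $F:\{0,1\}^V\to\mathbb{R}_{\ge0}$; $\mathrm{supp}(F)=\{x:F(x)\ne0\}$. $F$ is degenerate if it is a product $F(x)=\prod_{v\in V}U_v(x_v)$ of functions of single variables (equivalently, up to renaming, a tensor product of signatures of arity at most one). A partial configuration $p$ is an element of $\{0,1\}^{\mathrm{dom}(p)}$, $\mathrm{dom}(p)\subseteq V$; the pinning $F_p$ on $V\setminus\mathrm{dom}(p)$ is $F_p(x)=F(x,p)$. $\overline x_i=1-x_i$. *)

theory Defs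
  imports Complex_Main
begin

text \<open>Configurations x \<in> {0,1}^V are encoded as subsets x \<subseteq> V (the set of
variables set to 1).\<close>

definition signature :: "'v set \<Rightarrow> ('v set \<Rightarrow> real) \<Rightarrow> bool" where
  "signature V F \<longleftrightarrow> (\<forall>x. x \<subseteq> V \<longrightarrow> F x \<ge> 0)"

definition supp :: "'v set \<Rightarrow> ('v set \<Rightarrow> real) \<Rightarrow> 'v set set" where
  "supp V F = {x. x \<subseteq> V \<and> F x \<noteq> 0}"

text \<open>Degenerate: a tensor product of signatures of arity at most one, i.e. a
nonnegative constant (arity-0 factor) times a product of nonnegative unary
functions U v evaluated at the value x_v = (v \<in> x).\<close>

definition degenerate :: "'v set \<Rightarrow> ('v set \<Rightarrow> real) \<Rightarrow> bool" where
  "degenerate V F \<longleftrightarrow> (\<exists>(c::real) (U :: 'v \<Rightarrow> bool \<Rightarrow> real).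
      c \<ge> 0 \<and> (\<forall>v b. U v b \<ge> 0) \<and>
      (\<forall>x. x \<subseteq> V \<longrightarrow> F x = c * (\<Prod>v\<in>V. U v (v \<in> x))))"

text \<open>A partial configuration p with domain D \<subseteq> V is encoded by (D, P) with
P \<subseteq> D the set of variables of D pinned to 1.  The pinning F_p is the
signature on V - D given by y \<mapsto> F (y \<union> P).\<close>

definition pinning :: "('v set \<Rightarrow> real) \<Rightarrow> 'v set \<Rightarrow> ('v set \<Rightarrow> real)" where
  "pinning F P = (\<lambda>y. F (y \<union> P))"

end

theory Submission
  imports Defs
begin

(* For a configuration a with F a \<noteq> 0, F is degenerate iff it satisfies the
   "star identity" at a:  F x * F a ^ |V| = F a * \<Prod>v. F (a with coordinate v set to x_v),
   which expresses F x through the values of F at the neighbours of a.  Pinning one variable t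
   yields a degenerate signature, hence the star identity of that pinning; this gives the
   star identity at a for every x that agrees with a at some variable, i.e. for every x except
   the complement V - a.  For the complement we distinguish two cases (|V| \<ge> 3):
   if a has a neighbour b in the support, an exchange relation between the neighbours of a and b
   (obtained by pinning a third variable) transfers the identity to V - a, so F is degenerate;
   if all neighbours of a vanish, every other support point must be V - a, so either
   supp F = {a, V - a} or F (V - a) = 0 and the identity at V - a holds trivially. *)

definition assign :: "'v set \<Rightarrow> 'v \<Rightarrow> bool \<Rightarrow> 'v set" where
  "assign a v b = (if b then insert v a else a - {v})"

abbreviation flip :: "'v set \<Rightarrow> 'v \<Rightarrow> 'v set" where
  "flip a v \<equiv> assign a v (v \<notin> a)"

lemma assign_subset: "a \<subseteq> V \<Longrightarrow> v \<in> V \<Longrightarrow> assign a v b \<subseteq> V"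
  by (auto simp: assign_def)

lemma assign_same: "(v \<in> x) = (v \<in> a) \<Longrightarrow> assign a v (v \<in> x) = a"
  by (auto simp: assign_def)

definition star_at :: "'v set \<Rightarrow> ('v set \<Rightarrow> real) \<Rightarrow> 'v set \<Rightarrow> 'v set \<Rightarrow> bool" where
  "star_at V F a x \<longleftrightarrow> F x * F a ^ card V = F a * (\<Prod>v\<in>V. F (assign a v (v \<in> x)))"

definition singly_pinned_degenerate :: "'v set \<Rightarrow> ('v set \<Rightarrow> real) \<Rightarrow> bool" where
  "singly_pinned_degenerate V F \<longleftrightarrow> (\<forall>t\<in>V. \<forall>P\<subseteq>{t}. degenerate (V - {t}) (pinning F P))"

lemma degenerate_star_at:
  assumes "degenerate V F" "finite V" "x \<subseteq> V" "a \<subseteq> V"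
  shows "star_at V F a x"
proof -
  obtain c U where c: "\<forall>y. y \<subseteq> V \<longrightarrow> F y = c * (\<Prod>v\<in>V. U v (v \<in> y))"
    using assms(1) unfolding degenerate_def by blast
  define g where "g v = U v (v \<in> a)" for v
  have neighbour: "F (assign a w (w \<in> x)) = c * (U w (w \<in> x) * (\<Prod>v\<in>V-{w}. g v))"
    if w: "w \<in> V" for w
  proof -
    have "F (assign a w (w \<in> x)) = c * (\<Prod>v\<in>V. U v (v \<in> assign a w (w \<in> x)))"
      using c assign_subset[OF assms(4) w] by blast
    also have "(\<Prod>v\<in>V. U v (v \<in> assign a w (w \<in> x)))
        = U w (w \<in> assign a w (w \<in> x)) * (\<Prod>v\<in>V-{w}. U v (v \<in> assign a w (w \<in> x)))"
      using prod.remove[OF assms(2) w] by blast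
    also have "U w (w \<in> assign a w (w \<in> x)) = U w (w \<in> x)"
      by (auto simp: assign_def)
    also have "(\<Prod>v\<in>V-{w}. U v (v \<in> assign a w (w \<in> x))) = (\<Prod>v\<in>V-{w}. g v)"
      by (rule prod.cong) (auto simp: assign_def g_def)
    finally show ?thesis .
  qed
  have leave_one_out: "(\<Prod>w\<in>V. \<Prod>v\<in>V-{w}. g v) * (\<Prod>v\<in>V. g v) = (\<Prod>v\<in>V. g v) ^ card V"
  proof -
    have "(\<Prod>w\<in>V. \<Prod>v\<in>V-{w}. g v) * (\<Prod>v\<in>V. g v) = (\<Prod>w\<in>V. (\<Prod>v\<in>V-{w}. g v) * g w)"
      by (simp add: prod.distrib)
    also have "\<dots> = (\<Prod>w\<in>V. \<Prod>v\<in>V. g v)"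
      by (rule prod.cong) (auto simp: prod.remove[OF assms(2)] mult.commute)
    finally show ?thesis by simp
  qed
  have Fx: "F x = c * (\<Prod>w\<in>V. U w (w \<in> x))" using c assms(3) by blast
  have Fa: "F a = c * (\<Prod>v\<in>V. g v)" using c assms(4) by (simp add: g_def)
  have "F a * (\<Prod>w\<in>V. F (assign a w (w \<in> x)))
      = c * c ^ card V * (\<Prod>w\<in>V. U w (w \<in> x))
          * ((\<Prod>w\<in>V. \<Prod>v\<in>V-{w}. g v) * (\<Prod>v\<in>V. g v))"
    unfolding Fa by (simp add: neighbour prod.distrib mult_ac)
  also have "\<dots> = F x * F a ^ card V"
    unfolding leave_one_out Fx Fa power_mult_distrib by (simp only: mult_ac)
  finally show ?thesis unfolding star_at_def by simp
qed

lemma star_at_degenerate: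
  assumes "finite V" "signature V F" "a \<subseteq> V" "F a \<noteq> 0"
    and star: "\<forall>x. x \<subseteq> V \<longrightarrow> star_at V F a x"
  shows "degenerate V F"
  unfolding degenerate_def
proof (intro exI[of _ "F a"] exI[of _ "\<lambda>v b. if v \<in> V then F (assign a v b) / F a else 1"]
    conjI allI impI)
  show "0 \<le> F a" using assms(2,3) unfolding signature_def by auto
next
  fix v b show "0 \<le> (if v \<in> V then F (assign a v b) / F a else 1)"
    using assms(2,3) assign_subset[OF assms(3)] unfolding signature_def by auto
next
  fix x assume x: "x \<subseteq> V"
  have "(\<Prod>v\<in>V. if v \<in> V then F (assign a v (v \<in> x)) / F a else 1)
      = (\<Prod>v\<in>V. F (assign a v (v \<in> x))) / F a ^ card V"
    by (simp add: prod_dividef)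
  also have "(\<Prod>v\<in>V. F (assign a v (v \<in> x))) = F x * F a ^ card V / F a"
    using star x assms(4) unfolding star_at_def by (simp add: field_simps)
  finally show "F x = F a * (\<Prod>v\<in>V. if v \<in> V then F (assign a v (v \<in> x)) / F a else 1)"
    using assms(4) by simp
qed

lemma degenerate_card_le_1:
  assumes "finite V" "card V \<le> 1" "signature V F"
  shows "degenerate V F"
proof (cases "V = {}")
  case True
  then show ?thesis unfolding degenerate_def using assms(3) unfolding signature_def
    by (intro exI[of _ "F {}"] exI[of _ "\<lambda>_ _. 1"]) auto
next
  case False
  then obtain v where V: "V = {v}"
    using assms(1,2) by (metis card_0_eq card_1_singletonE le_eq_less_or_eq less_one)
  show ?thesis unfolding degenerate_def
  proof (intro exI[of _ 1] exI[of _ "\<lambda>w b. F (if b then {v} else {})"] conjI allI impI)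
    fix w b show "0 \<le> F (if b then {v} else {})" using assms(3) V unfolding signature_def by auto
  next
    fix x assume "x \<subseteq> V"
    then have "x = {} \<or> x = {v}" using V by auto
    then show "F x = 1 * (\<Prod>w\<in>V. F (if w \<in> x then {v} else {}))" using V by auto
  qed simp
qed

lemma prod_assign_outside:
  assumes "finite V" "S \<subseteq> V" "\<forall>v\<in>V-S. (v \<in> x) = (v \<in> a)"
  shows "(\<Prod>v\<in>V. F (assign a v (v \<in> x))) = F a ^ card (V - S) * (\<Prod>v\<in>S. F (assign a v (v \<in> x)))"
proof -
  have "(\<Prod>v\<in>V. F (assign a v (v \<in> x)))
      = (\<Prod>v\<in>V-S. F (assign a v (v \<in> x))) * (\<Prod>v\<in>S. F (assign a v (v \<in> x)))"
    using prod.subset_diff[OF assms(2,1)] by simp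
  also have "(\<Prod>v\<in>V-S. F (assign a v (v \<in> x))) = (\<Prod>v\<in>V-S. F a)"
    using assms(3) by (intro prod.cong) (auto simp: assign_same)
  finally show ?thesis by simp
qed

text \<open>The star identity of the pinning of t, rewritten in terms of F: it holds for base
  points a and arguments x that agree at t.\<close>

lemma pinned_star:
  assumes "finite V" "t \<in> V" "degenerate (V - {t}) (pinning F ({t} \<inter> a))"
    and "a \<subseteq> V" "x \<subseteq> V" "(t \<in> x) = (t \<in> a)"
  shows "F x * F a ^ (card V - 1) = F a * (\<Prod>w\<in>V-{t}. F (assign a w (w \<in> x)))"
proof -
  let ?G = "pinning F ({t} \<inter> a)"
  have star: "star_at (V - {t}) ?G (a - {t}) (x - {t})"
    using assms(1,4,5) by (intro degenerate_star_at[OF assms(3)]) auto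
  have "x - {t} \<union> ({t} \<inter> a) = x" "a - {t} \<union> ({t} \<inter> a) = a"
    using assms(6) by auto
  then have Gx: "?G (x - {t}) = F x" and Ga: "?G (a - {t}) = F a"
    unfolding pinning_def by simp_all
  have "?G (assign (a - {t}) w (w \<in> x - {t})) = F (assign a w (w \<in> x))"
    if "w \<in> V - {t}" for w
  proof -
    have "assign (a - {t}) w (w \<in> x - {t}) \<union> ({t} \<inter> a) = assign a w (w \<in> x)"
      using that by (auto simp: assign_def)
    then show ?thesis by (simp add: pinning_def)
  qed
  then have "(\<Prod>w\<in>V-{t}. ?G (assign (a - {t}) w (w \<in> x - {t})))
      = (\<Prod>w\<in>V-{t}. F (assign a w (w \<in> x)))"
    by (rule prod.cong[OF refl])
  with star show ?thesis
    unfolding star_at_def Gx Ga card_Diff_singleton[OF assms(2)] by simp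
qed

text \<open>The star identity at a holds at every x except possibly the complement V - a:
  pin a variable on which x and a agree.\<close>

lemma star_at_unless_complement:
  assumes "finite V" "singly_pinned_degenerate V F" "a \<subseteq> V" "x \<subseteq> V" "x \<noteq> V - a"
  shows "star_at V F a x"
proof -
  have "\<exists>t\<in>V. (t \<in> x) = (t \<in> a)"
  proof (rule ccontr)
    assume "\<not> ?thesis"
    then have "x = V - a" using assms(3,4) by auto
    then show False using assms(5) by simp
  qed
  then obtain t where t: "t \<in> V" "(t \<in> x) = (t \<in> a)" by blast
  have "degenerate (V - {t}) (pinning F ({t} \<inter> a))"
    using assms(2) t(1) unfolding singly_pinned_degenerate_def by simp
  then have pinned: "F x * F a ^ (card V - 1) = F a * (\<Prod>w\<in>V-{t}. F (assign a w (w \<in> x)))"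
    by (rule pinned_star[OF assms(1) t(1) _ assms(3,4) t(2)])
  have "0 < card V" using assms(1) t(1) by (auto simp: card_gt_0_iff)
  then have "F a ^ card V = F a ^ (card V - 1) * F a" by (rule power_minus_mult[symmetric])
  then have "F x * F a ^ card V = F a * (F a * (\<Prod>w\<in>V-{t}. F (assign a w (w \<in> x))))"
    using pinned by simp
  also have "F a * (\<Prod>w\<in>V-{t}. F (assign a w (w \<in> x))) = (\<Prod>v\<in>V. F (assign a v (v \<in> x)))"
    using prod.remove[OF assms(1) t(1), of "\<lambda>v. F (assign a v (v \<in> x))"] assign_same[OF t(2)]
    by simp
  finally show ?thesis unfolding star_at_def .
qed

text \<open>Exchange relation: for two distinct variables u and w, the neighbours of a and of its
  neighbour across u are related; this uses a third variable, hence |V| \<ge> 3.\<close>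

lemma exchange:
  assumes "finite V" "3 \<le> card V" "singly_pinned_degenerate V F"
    and "a \<subseteq> V" "F a \<noteq> 0" "u \<in> V" "w \<in> V" "w \<noteq> u"
  shows "F (flip (flip a u) w) * F a = F (flip a u) * F (flip a w)"
proof -
  define x where "x = flip (flip a u) w"
  have x: "x \<subseteq> V" unfolding x_def using assms(4,6,7) by (simp add: assign_subset)
  have outside: "\<forall>v\<in>V-{u,w}. (v \<in> x) = (v \<in> a)"
    unfolding x_def assign_def by auto
  have "\<not> V \<subseteq> {u, w}"
    using card_mono[of "{u, w}" V] card_insert_le_m1[of 2 "{w}" u] assms(2) by auto
  then obtain t where "t \<in> V - {u, w}" by blast
  then have "x \<noteq> V - a" using outside by blast
  then have star: "star_at V F a x"
    using star_at_unless_complement assms(1,3,4) x by blast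
  have "assign a u (u \<in> x) = flip a u" "assign a w (w \<in> x) = flip a w"
    using assms(8) by (auto simp: x_def assign_def)
  then have "(\<Prod>v\<in>V. F (assign a v (v \<in> x))) = F a ^ card (V - {u, w}) * (F (flip a u) * F (flip a w))"
    using prod_assign_outside[OF assms(1) _ outside] assms(6-8) by simp
  moreover have "F a ^ card V = F a ^ card (V - {u, w}) * F a * F a"
  proof -
    have "card V = card (V - {u, w}) + 2"
      using card_Diff_subset[of "{u, w}" V] card_mono[OF assms(1), of "{u, w}"] assms(6-8) by auto
    then show ?thesis by (simp add: power_add power2_eq_square)
  qed
  ultimately have "(F a ^ card (V - {u, w}) * F a) * (F x * F a)
      = (F a ^ card (V - {u, w}) * F a) * (F (flip a u) * F (flip a w))"
    using star unfolding star_at_def by (simp add: mult_ac)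
  then show ?thesis
    using assms(5) unfolding x_def by simp
qed

text \<open>If a has a neighbour b = flip a u in the support, the star identity at a also holds at
  the complement V - a: pinning u expresses F (V - a) through the neighbours of b, which the
  exchange relation turns into neighbours of a.\<close>

lemma star_at_complement:
  assumes "finite V" "3 \<le> card V" "singly_pinned_degenerate V F"
    and "a \<subseteq> V" "F a \<noteq> 0" "u \<in> V" "F (flip a u) \<noteq> 0"
  shows "star_at V F a (V - a)"
proof -
  define b where "b = flip a u"
  define P where "P = (\<Prod>w\<in>V-{u}. F (flip b w))"
  define Q where "Q = (\<Prod>w\<in>V-{u}. F (flip a w))"
  have b: "b \<subseteq> V" unfolding b_def using assms(4,6) by (rule assign_subset)
  have card_u: "card (V - {u}) = card V - 1" using assms(6) by (rule card_Diff_singleton)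
  have "degenerate (V - {u}) (pinning F ({u} \<inter> b))"
    using assms(3,6) unfolding singly_pinned_degenerate_def by simp
  then have "F (V - a) * F b ^ (card V - 1) = F b * (\<Prod>w\<in>V-{u}. F (assign b w (w \<in> V - a)))"
    using assms(6) b by (intro pinned_star[OF assms(1,6)]) (auto simp: b_def assign_def)
  also have "(\<Prod>w\<in>V-{u}. F (assign b w (w \<in> V - a))) = P"
    unfolding P_def by (intro prod.cong) (auto simp: b_def assign_def)
  finally have pinned: "F (V - a) * F b ^ (card V - 1) = F b * P" .
  have "P * F a ^ (card V - 1) = (\<Prod>w\<in>V-{u}. F (flip b w) * F a)"
    unfolding P_def using card_u by (simp add: prod.distrib)
  also have "\<dots> = (\<Prod>w\<in>V-{u}. F b * F (flip a w))"
    unfolding b_def using exchange[OF assms(1-5)] assms(6) by (intro prod.cong) auto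
  also have "\<dots> = F b ^ (card V - 1) * Q"
    unfolding Q_def using card_u by (simp add: prod.distrib)
  finally have exchanged: "P * F a ^ (card V - 1) = F b ^ (card V - 1) * Q" .
  have "F b ^ (card V - 1) * (F (V - a) * F a ^ (card V - 1)) = F b ^ (card V - 1) * (F b * Q)"
    using pinned exchanged by (metis mult.assoc mult.commute)
  then have reduced: "F (V - a) * F a ^ (card V - 1) = F b * Q"
    using assms(7) unfolding b_def by simp
  have "(\<Prod>v\<in>V. F (assign a v (v \<in> V - a))) = F b * Q"
  proof -
    have "assign a u (u \<in> V - a) = b" using assms(6) by (simp add: b_def)
    moreover have "(\<Prod>v\<in>V-{u}. F (assign a v (v \<in> V - a))) = Q"
      unfolding Q_def by (intro prod.cong) auto
    ultimately show ?thesis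
      using prod.remove[OF assms(1,6), of "\<lambda>v. F (assign a v (v \<in> V - a))"] by simp
  qed
  moreover have "F a ^ card V = F a ^ (card V - 1) * F a"
    using assms(2) by (intro power_minus_mult[symmetric]) simp
  ultimately show ?thesis
    using reduced unfolding star_at_def by (simp add: mult_ac)
qed

text \<open>If all neighbours of a support point a vanish, the support contains at most a and its
  complement: for any other x the star product at a contains a vanishing neighbour.\<close>

lemma support_of_isolated_point:
  assumes "finite V" "singly_pinned_degenerate V F" "a \<subseteq> V" "F a \<noteq> 0"
    and isolated: "\<forall>u\<in>V. F (flip a u) = 0" and "x \<subseteq> V" "F x \<noteq> 0"
  shows "x = a \<or> x = V - a"
proof (rule ccontr)
  assume other: "\<not> (x = a \<or> x = V - a)"
  then have star: "star_at V F a x"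
    using star_at_unless_complement assms(1-3,6) by blast
  obtain v where v: "v \<in> V" "(v \<in> x) \<noteq> (v \<in> a)"
    using other assms(3,6) by blast
  then have "F (assign a v (v \<in> x)) = 0" using isolated by auto
  then have "(\<Prod>v\<in>V. F (assign a v (v \<in> x))) = 0"
    using assms(1) v(1) by (rule_tac prod_zero) auto
  then show False
    using star assms(4,7) unfolding star_at_def by simp
qed

lemma nondegenerate_support:
  assumes "finite V" "signature V F" "\<not> degenerate V F" "3 \<le> card V"
    and "singly_pinned_degenerate V F"
  shows "\<exists>a. a \<subseteq> V \<and> supp V F = {a, V - a}"
proof -
  have "\<exists>a. a \<subseteq> V \<and> F a \<noteq> 0"
  proof (rule ccontr)
    assume "\<not> ?thesis"
    then have "degenerate V F" unfolding degenerate_def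
      by (intro exI[of _ 0] exI[of _ "\<lambda>_ _. 0"]) auto
    then show False using assms(3) by contradiction
  qed
  then obtain a where a: "a \<subseteq> V" "F a \<noteq> 0" by blast
  have no_star: "\<not> star_at V F a (V - a)"
  proof
    assume "star_at V F a (V - a)"
    then have "\<forall>x. x \<subseteq> V \<longrightarrow> star_at V F a x"
      using star_at_unless_complement[OF assms(1,5) a(1)] by blast
    then show False using star_at_degenerate[OF assms(1,2) a] assms(3) by blast
  qed
  then have isolated: "\<forall>u\<in>V. F (flip a u) = 0"
    using star_at_complement[OF assms(1,4,5) a] by blast
  have "F (V - a) \<noteq> 0"
  proof
    assume zero: "F (V - a) = 0"
    obtain v where v: "v \<in> V" using assms(4) by fastforce
    then have "F (assign a v (v \<in> V - a)) = 0" using isolated by simp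
    then have "(\<Prod>v\<in>V. F (assign a v (v \<in> V - a))) = 0"
      using assms(1) v by (rule_tac prod_zero) auto
    then show False using no_star zero unfolding star_at_def by simp
  qed
  then have "supp V F = {a, V - a}"
    using support_of_isolated_point[OF assms(1,5) a isolated] a unfolding supp_def by auto
  then show ?thesis using a(1) by blast
qed

theorem mainTheorem10:
  fixes V :: "'v set" and F :: "'v set \<Rightarrow> real"
  assumes "finite V"
    and "signature V F"
    and "\<not> degenerate V F"
    and "\<forall>D P. D \<subseteq> V \<and> D \<noteq> {} \<and> P \<subseteq> D \<longrightarrow> degenerate (V - D) (pinning F P)"
  shows "card V = 2 \<or> (\<exists>x. x \<subseteq> V \<and> supp V F = {x, V - x})"
proof -
  have "singly_pinned_degenerate V F"
    using assms(4) unfolding singly_pinned_degenerate_def by blast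
  moreover have "\<not> card V \<le> 1"
    using degenerate_card_le_1 assms(1-3) by blast
  ultimately show ?thesis
    using nondegenerate_support[OF assms(1-3)] by (cases "card V = 2") auto
qed

end
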